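(* Let $p$ be an odd prime, $n\ge1$, $G=\mu_{p^n}$ and let $\mathcal{P}$ be a fusion partition of $G$ satisfying condition (p), with associated integers $b_0,\dots,b_n$ (where $u_k=\phi(p^{b_k})$ for $k<n$, and $b_n=0$). Then $b_{k+1}+k+1\ge b_k+k$ for all $0\le k\le n-1$.
   Context: A unital partition of a finite commutative group $G$ is a partition $G=\{1\}\sqcup A_0\sqcup\dots\sqcup A_s$ such that, with $a_i=\sum_{x\in A_i}x\in\mathbb{Z}[G]$, the $\mathbb{Z}$-span of $1$ and the $a_i$ is closed under multiplication. It is a fusion partition if moreover (1) the set of inverses of each member is a member, denoted $A_{i^*}$, and (2) writing $a_ia_j=\sum_kn^k_{i,j}a_k$, one has $n^k_{i,j}|A_k|=n^{j^*}_{i,k^*}|A_{j^*}|$. Condition (p): every member has cardinality a power of $p$. $B_k=\{x^{p^k}\mid x \text{ a generator of } G\}$, $\mathcal{P}_k=\{A\in\mathcal{P}\mid A\cap B_k\ne\emptyset\}$. Fix an integer $\alpha$ generating $(\mathbb{Z}/p^n\mathbb{Z})^\times$; for $A\in\mathcal{P}_k$, $y\in A\cap B_k$, $u_k$ is the smallest positive integer with $y^{\alpha^{u_k}}\in A$. Under (p), $u_k=\phi(p^{b_k})$ for a unique integer $1\le b_k\le n-k$ ($k<n$); set $b_n=0$. *)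

theory Defs
  imports "HOL-Number_Theory.Number_Theory"
begin

text \<open>The cyclic group mu_N (N = p^n) is modelled additively by exponents:
  x in {..<N} stands for zeta^x, zeta a primitive N-th root of unity.
  Elements of Z[G] are functions nat => int (only arguments < N matter).\<close>

definition ind :: "nat set \<Rightarrow> nat \<Rightarrow> int" where
  "ind A x = (if x \<in> A then 1 else 0)"

text \<open>Product in the group ring Z[G] (convolution).\<close>
definition cconv :: "nat \<Rightarrow> (nat \<Rightarrow> int) \<Rightarrow> (nat \<Rightarrow> int) \<Rightarrow> nat \<Rightarrow> int" where
  "cconv N a b x = (\<Sum>y<N. a y * b ((x + N - y) mod N))"

definition gneg :: "nat \<Rightarrow> nat \<Rightarrow> nat" where
  "gneg N x = (N - x) mod N"

definition is_partition_of :: "nat \<Rightarrow> nat set set \<Rightarrow> bool" where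
  "is_partition_of N P \<longleftrightarrow> (\<forall>A\<in>P. A \<noteq> {}) \<and> \<Union>P = {..<N} \<and>
     (\<forall>A\<in>P. \<forall>B\<in>P. A \<noteq> B \<longrightarrow> A \<inter> B = {})"

text \<open>Z-span of the a_C, C in P (this includes 1 = a_{{1}} since {1} is a member).\<close>
definition zspan :: "nat \<Rightarrow> nat set set \<Rightarrow> (nat \<Rightarrow> int) set" where
  "zspan N P = {f. \<exists>c :: nat set \<Rightarrow> int. \<forall>x<N. f x = (\<Sum>C\<in>P. c C * ind C x)}"

definition unital_partition :: "nat \<Rightarrow> nat set set \<Rightarrow> bool" where
  "unital_partition N P \<longleftrightarrow> is_partition_of N P \<and> {0} \<in> P \<and>
     (\<forall>f\<in>zspan N P. \<forall>g\<in>zspan N P. cconv N f g \<in> zspan N P)"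

text \<open>Structure constant n^C_{A,B}: coefficient of a_C in a_A a_B
  (for a unital partition this is the value of a_A a_B at any point of C).\<close>
definition struct_const :: "nat \<Rightarrow> nat set \<Rightarrow> nat set \<Rightarrow> nat set \<Rightarrow> int" where
  "struct_const N A B C = cconv N (ind A) (ind B) (SOME c. c \<in> C)"

definition fusion_partition :: "nat \<Rightarrow> nat set set \<Rightarrow> bool" where
  "fusion_partition N P \<longleftrightarrow> unital_partition N P \<and>
     (\<forall>A\<in>P. gneg N ` A \<in> P) \<and>
     (\<forall>A\<in>P. \<forall>B\<in>P. \<forall>C\<in>P.
        struct_const N A B C * int (card C) =
        struct_const N A (gneg N ` C) (gneg N ` B) * int (card (gneg N ` B)))"

definition cond_p :: "nat \<Rightarrow> nat set set \<Rightarrow> bool" where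
  "cond_p p P \<longleftrightarrow> (\<forall>A\<in>P. \<exists>e. card A = p ^ e)"

definition Bset :: "nat \<Rightarrow> nat \<Rightarrow> nat \<Rightarrow> nat set" where
  "Bset p n k = {(p ^ k * x) mod (p ^ n) | x. x < p ^ n \<and> coprime x (p ^ n)}"

definition Pset :: "nat \<Rightarrow> nat \<Rightarrow> nat set set \<Rightarrow> nat \<Rightarrow> nat set set" where
  "Pset p n P k = {A\<in>P. A \<inter> Bset p n k \<noteq> {}}"

definition uval :: "nat \<Rightarrow> nat \<Rightarrow> nat \<Rightarrow> nat set \<Rightarrow> nat \<Rightarrow> nat" where
  "uval p n \<alpha> A y = (LEAST u. 0 < u \<and> (\<alpha> ^ u * y) mod (p ^ n) \<in> A)"

end

theory Submission
  imports Defs "HOL-Computational_Algebra.Polynomial"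
begin

(* Write N = p^n and model G = mu_N additively by exponents in {..<N}.  The proof has
   three stages.
   1. Multiplier theorem: every unit m of Z/NZ permutes the members of a unital
      partition.  For a prime q not dividing N the Frobenius congruence
      (sum_{x in A} X^x)^q = sum_{x in A} X^(q x) mod q shows that qA is a union of
      members; induction over the prime factors of m and the inverse unit give mA in P.
   2. Shape of a member: if y is in A and the least u > 0 with alpha^u y in A is
      phi(p^b), the units fixing A are exactly the units = 1 mod p^b.  Hence A meets each
      layer of p-adic valuation j in a residue class mod p^(j+b) of size p^(n-j-b), and
      condition (p) forces A to meet only the layer of y: A = y + p^(k+b) Z.
   3. Key step: a_A^p is supported on p y + p^(k+b) Z, so the member of p y lies there.
      A unit carries it onto the member A' realising b_(k+1) = c; as alpha^phi(p^c)
      stabilises A', it fixes p y mod p^(k+b), whence phi(p^(b-1)) | phi(p^c), b <= c+1.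
   The theorem follows for k < n - 1; for k = n - 1 it is trivial since b_n = 0. *)

text \<open>An integer polynomial represents an element of Z[G] after reducing exponents mod N:
  cyc_coeff N Q z is the coefficient of zeta^z in the image of Q.\<close>
definition cyc_coeff :: "nat \<Rightarrow> int poly \<Rightarrow> nat \<Rightarrow> int" where
  "cyc_coeff N Q z = (\<Sum>i\<le>degree Q. if i mod N = z then coeff Q i else 0)"

lemma cyc_coeff_bound:
  assumes "degree Q \<le> M"
  shows "cyc_coeff N Q z = (\<Sum>i\<le>M. if i mod N = z then coeff Q i else 0)"
  unfolding cyc_coeff_def
  by (rule sum.mono_neutral_left) (use assms in \<open>auto simp: coeff_eq_0\<close>)

lemma cyc_coeff_add: "cyc_coeff N (Q + R) z = cyc_coeff N Q z + cyc_coeff N R z"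
proof -
  define M where "M = max (degree Q) (degree R)"
  have "degree (Q + R) \<le> M" unfolding M_def by (rule degree_add_le) auto
  then have "cyc_coeff N (Q + R) z = (\<Sum>i\<le>M. if i mod N = z then coeff (Q + R) i else 0)"
    by (rule cyc_coeff_bound)
  also have "\<dots> = (\<Sum>i\<le>M. if i mod N = z then coeff Q i else 0)
                  + (\<Sum>i\<le>M. if i mod N = z then coeff R i else 0)"
    by (simp add: sum.distrib[symmetric] if_distrib cong: if_cong)
  also have "\<dots> = cyc_coeff N Q z + cyc_coeff N R z"
    by (subst (1 2) cyc_coeff_bound[where M = M]) (auto simp: M_def)
  finally show ?thesis .
qed

lemma cyc_coeff_sum: "cyc_coeff N (\<Sum>x\<in>A. F x) z = (\<Sum>x\<in>A. cyc_coeff N (F x) z)"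
proof (induction A rule: infinite_finite_induct)
  case (insert x A)
  then show ?case by (simp add: cyc_coeff_add)
qed (simp_all add: cyc_coeff_def sum.neutral)

lemma cyc_coeff_smult: "cyc_coeff N (smult c Q) z = c * cyc_coeff N Q z"
proof -
  have "cyc_coeff N (smult c Q) z = (\<Sum>i\<le>degree Q. if i mod N = z then coeff (smult c Q) i else 0)"
    by (rule cyc_coeff_bound) (rule degree_smult_le)
  also have "\<dots> = c * cyc_coeff N Q z"
    by (simp add: cyc_coeff_def sum_distrib_left if_distrib cong: if_cong)
  finally show ?thesis .
qed

lemma cyc_coeff_monom: "cyc_coeff N (monom c i) z = (if i mod N = z then c else 0)"
proof -
  have "cyc_coeff N (monom c i) z = (\<Sum>j\<le>i. if j mod N = z then coeff (monom c i) j else 0)"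
    by (rule cyc_coeff_bound) (rule degree_monom_le)
  also have "\<dots> = (\<Sum>j\<in>{i}. if j mod N = z then coeff (monom c i) j else 0)"
    by (rule sum.mono_neutral_right) auto
  finally show ?thesis by simp
qed

lemma cyc_coeff_monom_mult:
  assumes "x < N" "z < N"
  shows "cyc_coeff N (monom 1 x * Q) z = cyc_coeff N Q ((z + N - x) mod N)"
proof -
  have shift: "(l + x) mod N = z \<longleftrightarrow> l mod N = (z + N - x) mod N" for l
  proof -
    have "[l + x = z] (mod N) \<longleftrightarrow> [l + x = z + N] (mod N)"
      by (simp add: cong_def)
    also have "\<dots> \<longleftrightarrow> [l = z + N - x] (mod N)"
      using assms(1) cong_add_rcancel_nat[of l x "z + N - x" N] by simp
    finally show ?thesis using assms(2) by (simp add: cong_def)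
  qed
  have "degree (monom 1 x * Q) \<le> x + degree Q"
    using degree_mult_le[of "monom (1::int) x" Q] degree_monom_le[of "1::int" x] by linarith
  then have "cyc_coeff N (monom 1 x * Q) z
      = (\<Sum>i\<le>x + degree Q. if i mod N = z then coeff (monom 1 x * Q) i else 0)"
    by (rule cyc_coeff_bound)
  also have "\<dots> = (\<Sum>i\<in>(\<lambda>l. l + x) ` {..degree Q}. if i mod N = z then coeff (monom 1 x * Q) i else 0)"
  proof (rule sum.mono_neutral_right)
    show "\<forall>i\<in>{..x + degree Q} - (\<lambda>l. l + x) ` {..degree Q}.
        (if i mod N = z then coeff (monom 1 x * Q) i else 0) = 0"
    proof
      fix i assume i: "i \<in> {..x + degree Q} - (\<lambda>l. l + x) ` {..degree Q}"
      have "i < x"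
      proof (rule ccontr)
        assume "\<not> i < x"
        then have "i = (i - x) + x" "i - x \<le> degree Q" using i by auto
        then show False using i by (metis DiffD2 atMost_iff image_eqI)
      qed
      then show "(if i mod N = z then coeff (monom 1 x * Q) i else 0) = 0"
        by (simp add: coeff_monom_mult)
    qed
  qed auto
  also have "\<dots> = (\<Sum>l\<le>degree Q. if (l + x) mod N = z then coeff Q l else 0)"
    by (subst sum.reindex) (auto simp: inj_on_def coeff_monom_mult cong: if_cong)
  also have "\<dots> = cyc_coeff N Q ((z + N - x) mod N)"
    unfolding cyc_coeff_def shift ..
  finally show ?thesis .
qed

fun gpow :: "nat \<Rightarrow> (nat \<Rightarrow> int) \<Rightarrow> nat \<Rightarrow> nat \<Rightarrow> int" where
  "gpow N f 0 = ind {0}"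
| "gpow N f (Suc i) = cconv N f (gpow N f i)"

definition block_poly :: "nat set \<Rightarrow> int poly" where
  "block_poly A = (\<Sum>x\<in>A. monom 1 x)"

lemma sum_ind:
  assumes "A \<subseteq> {..<N}"
  shows "(\<Sum>y<N. ind A y * g y) = (\<Sum>y\<in>A. g y)"
proof -
  have "(\<Sum>y<N. ind A y * g y) = (\<Sum>y\<in>A. ind A y * g y)"
    by (rule sum.mono_neutral_right) (use assms in \<open>auto simp: ind_def\<close>)
  also have "\<dots> = (\<Sum>y\<in>A. g y)" by (rule sum.cong) (auto simp: ind_def)
  finally show ?thesis .
qed

text \<open>Reduction mod X^N - 1 turns polynomial multiplication into convolution, so the
  powers of a_A are computed by the powers of block_poly A.\<close>
lemma gpow_cyc_coeff:
  assumes "A \<subseteq> {..<N}" "N > 0" "z < N"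
  shows "gpow N (ind A) i z = cyc_coeff N (block_poly A ^ i) z"
  using assms(3)
proof (induction i arbitrary: z)
  case 0
  then show ?case by (simp add: cyc_coeff_monom[of N 1 0, simplified] ind_def)
next
  case (Suc i)
  have "cyc_coeff N (block_poly A * block_poly A ^ i) z
      = (\<Sum>x\<in>A. cyc_coeff N (block_poly A ^ i) ((z + N - x) mod N))"
    using assms(1) Suc.prems
    by (auto simp: block_poly_def sum_distrib_right cyc_coeff_sum cyc_coeff_monom_mult
        intro!: sum.cong)
  also have "\<dots> = cconv N (ind A) (gpow N (ind A) i) z"
    unfolding cconv_def sum_ind[OF assms(1)] using assms(2) by (intro sum.cong refl Suc.IH[symmetric]) simp
  finally show ?case by simp
qed

lemma add_power_prime_cong:
  assumes "prime q"
  shows "\<exists>r. (a + b) ^ q = a ^ q + b ^ q + of_nat q * (r :: 'a :: comm_ring_1)"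
proof -
  obtain m where qm: "q = Suc m" using assms by (cases q) auto
  define f where "f k = of_nat (q choose k) * a ^ k * b ^ (q - k)" for k
  define r where "r = (\<Sum>i<m. of_nat ((q choose Suc i) div q) * a ^ Suc i * b ^ (q - Suc i) :: 'a)"
  have "(a + b) ^ q = (\<Sum>k\<le>Suc m. f k)" unfolding f_def qm by (rule binomial_ring)
  also have "\<dots> = f 0 + (\<Sum>i\<le>m. f (Suc i))" by (rule sum.atMost_Suc_shift)
  also have "(\<Sum>i\<le>m. f (Suc i)) = (\<Sum>i<m. f (Suc i)) + f (Suc m)"
    by (simp only: lessThan_Suc_atMost[symmetric] sum.lessThan_Suc)
  also have "(\<Sum>i<m. f (Suc i)) = of_nat q * r"
    unfolding r_def sum_distrib_left
  proof (rule sum.cong[OF refl])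
    fix i assume "i \<in> {..<m}"
    then have "q dvd (q choose Suc i)" using assms qm by (intro dvd_choose_prime) auto
    then have "(of_nat (q choose Suc i) :: 'a) = of_nat q * of_nat ((q choose Suc i) div q)"
      by (metis dvd_mult_div_cancel of_nat_mult)
    then show "f (Suc i) = of_nat q * (of_nat ((q choose Suc i) div q) * a ^ Suc i * b ^ (q - Suc i))"
      unfolding f_def by (simp add: mult.assoc)
  qed
  finally show ?thesis unfolding f_def qm by (auto simp: algebra_simps)
qed

lemma sum_power_prime_cong:
  assumes "prime q" "finite A"
  shows "\<exists>r. (\<Sum>x\<in>A. f x) ^ q = (\<Sum>x\<in>A. f x ^ q) + of_nat q * (r :: 'a :: comm_ring_1)"
  using assms(2)
proof (induction A rule: finite_induct)
  case empty
  have "q > 0" using assms prime_gt_0_nat by blast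
  then show ?case by (intro exI[of _ 0]) (simp add: power_0_left)
next
  case (insert x F)
  obtain r1 where r1: "(\<Sum>x\<in>F. f x) ^ q = (\<Sum>x\<in>F. f x ^ q) + of_nat q * r1" using insert by blast
  obtain r2 where r2: "(f x + (\<Sum>x\<in>F. f x)) ^ q = f x ^ q + (\<Sum>x\<in>F. f x) ^ q + of_nat q * r2"
    using add_power_prime_cong[OF assms(1)] by blast
  show ?case using insert r1 r2 by (intro exI[of _ "r1 + r2"]) (simp add: algebra_simps)
qed

definition mulset :: "nat \<Rightarrow> nat \<Rightarrow> nat set \<Rightarrow> nat set" where
  "mulset N m S = (\<lambda>x. (m * x) mod N) ` S"

lemma mulset_sub: "N > 0 \<Longrightarrow> mulset N m S \<subseteq> {..<N}"
  unfolding mulset_def by auto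

lemma mulset_mult: "mulset N (a * b) S = mulset N a (mulset N b S)"
  unfolding mulset_def image_image
  by (intro image_cong refl) (simp add: mod_mult_right_eq mult.assoc)

lemma mulset_fixed_mem: "mulset N m A = A \<Longrightarrow> w \<in> A \<Longrightarrow> (m * w) mod N \<in> A"
  unfolding mulset_def by blast

lemma mulset_1: "S \<subseteq> {..<N} \<Longrightarrow> mulset N 1 S = S"
  unfolding mulset_def by (subst image_cong[of S S _ id]) auto

lemma mod_mult_inj:
  fixes q N x y :: nat
  assumes "coprime q N" "x < N" "y < N" "(q * x) mod N = (q * y) mod N"
  shows "x = y"
proof -
  have "[q * x = q * y] (mod N)" using assms(4) unfolding cong_def .
  then have "[x = y] (mod N)" using cong_mult_lcancel_nat[OF assms(1)] by blast
  then show ?thesis using assms(2,3) by (rule cong_less_modulus_unique_nat)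
qed

lemma mulset_inverse:
  assumes "coprime m N" "N > 1"
  obtains m' where "coprime m' N" "\<And>B. B \<subseteq> {..<N} \<Longrightarrow> mulset N (m' * m) B = B"
proof
  define m' where "m' = m ^ (totient N - 1)"
  show "coprime m' N" using assms(1) by (simp add: m'_def)
  have "m' * m = m ^ totient N"
    unfolding m'_def using assms(2) by (simp flip: power_Suc2)
  then have inv: "[m' * m = 1] (mod N)"
    using euler_theorem[of m N] assms(1) by (simp add: coprime_commute)
  fix B :: "nat set" assume B: "B \<subseteq> {..<N}"
  have "((m' * m) * x) mod N = x" if "x < N" for x
    using cong_scalar_right[OF inv, of x] that by (simp add: cong_def)
  then show "mulset N (m' * m) B = B"
    using B unfolding mulset_def by (subst image_cong[of B B _ id]) auto
qed

lemma partition_finite: "is_partition_of N P \<Longrightarrow> finite P"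
  unfolding is_partition_of_def by (rule finite_subset[of P "Pow {..<N}"]) auto

lemma partition_sub: "is_partition_of N P \<Longrightarrow> A \<in> P \<Longrightarrow> A \<subseteq> {..<N}"
  unfolding is_partition_of_def by blast

lemma partition_disj:
  "is_partition_of N P \<Longrightarrow> A \<in> P \<Longrightarrow> B \<in> P \<Longrightarrow> x \<in> A \<Longrightarrow> x \<in> B \<Longrightarrow> A = B"
  unfolding is_partition_of_def by blast

lemma partition_cover:
  assumes "is_partition_of N P" "x < N" obtains A where "A \<in> P" "x \<in> A"
  using assms unfolding is_partition_of_def by blast

lemma zspan_const:
  assumes P: "is_partition_of N P" and f: "f \<in> zspan N P"
    and C: "C \<in> P" "z1 \<in> C" "z2 \<in> C"
  shows "f z1 = f z2"
proof -
  obtain c where c: "\<And>x. x < N \<Longrightarrow> f x = (\<Sum>C\<in>P. c C * ind C x)"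
    using f unfolding zspan_def by blast
  have const_value: "f z = c C" if "z \<in> C" for z
  proof -
    have "z < N" using partition_sub[OF P C(1)] that by blast
    then have "f z = (\<Sum>C'\<in>P. c C' * ind C' z)" using c by blast
    also have "\<dots> = (\<Sum>C'\<in>P. if C' = C then c C else 0)"
    proof (rule sum.cong[OF refl])
      fix C' assume "C' \<in> P"
      then have "z \<in> C' \<longleftrightarrow> C' = C" using partition_disj[OF P _ C(1) _ that] that by blast
      then show "c C' * ind C' z = (if C' = C then c C else 0)" by (simp add: ind_def)
    qed
    also have "\<dots> = c C" using partition_finite[OF P] C(1) by simp
    finally show ?thesis .
  qed
  show ?thesis using const_value[OF C(2)] const_value[OF C(3)] by simp
qed

lemma ind_zspan:
  assumes "A \<in> P" "finite P" shows "ind A \<in> zspan N P"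
  unfolding zspan_def
proof (intro CollectI exI[of _ "\<lambda>C. if C = A then 1 else 0"] allI impI)
  fix x
  have "(\<Sum>C\<in>P. (if C = A then 1 else 0) * ind C x) = (\<Sum>C\<in>P. if C = A then ind A x else 0)"
    by (rule sum.cong) auto
  then show "ind A x = (\<Sum>C\<in>P. (if C = A then 1 else 0) * ind C x)"
    using assms by simp
qed

lemma gpow_zspan:
  assumes "unital_partition N P" "A \<in> P"
  shows "gpow N (ind A) i \<in> zspan N P"
proof -
  have P: "finite P" "{0} \<in> P"
    and mult: "\<And>f g. f \<in> zspan N P \<Longrightarrow> g \<in> zspan N P \<Longrightarrow> cconv N f g \<in> zspan N P"
    using assms partition_finite unfolding unital_partition_def by auto
  show ?thesis
    by (induction i) (use ind_zspan[OF P(2,1)] mult[OF ind_zspan[OF assms(2) P(1)]] in simp_all)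
qed

lemma gpow_nonneg: "gpow N (ind A) i z \<ge> 0"
proof (induction i arbitrary: z)
  case 0 then show ?case by (simp add: ind_def)
next
  case (Suc i)
  have "0 \<le> ind A x" for x by (simp add: ind_def)
  then show ?case unfolding gpow.simps cconv_def using Suc.IH
    by (intro sum_nonneg mult_nonneg_nonneg) auto
qed

lemma gpow_support:
  fixes M :: nat
  assumes AN: "A \<subseteq> {..<N}" and MN: "M dvd N" and cos: "\<And>z. z \<in> A \<Longrightarrow> [z = y] (mod M)"
  shows "z < N \<Longrightarrow> gpow N (ind A) i z \<noteq> 0 \<Longrightarrow> [z = i * y] (mod M)"
proof (induction i arbitrary: z)
  case 0 then show ?case by (simp add: ind_def split: if_splits)
next
  case (Suc i)
  have "(\<Sum>w<N. ind A w * gpow N (ind A) i ((z + N - w) mod N)) \<noteq> 0" using Suc.prems by (simp add: cconv_def)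
  then obtain w where w: "w < N" "ind A w * gpow N (ind A) i ((z + N - w) mod N) \<noteq> 0"
    by (meson lessThan_iff sum.neutral)
  then have wA: "w \<in> A" by (auto simp: ind_def split: if_splits)
  have "gpow N (ind A) i ((z + N - w) mod N) \<noteq> 0" using w by auto
  then have c1: "[(z + N - w) mod N = i * y] (mod M)" by (intro Suc.IH) (use w in simp)
  have "[(z + N - w) mod N = z + N - w] (mod M)" using MN by (metis cong_dvd_modulus_nat cong_mod_left cong_refl)
  then have c2: "[z + N - w = i * y] (mod M)" using c1 by (metis cong_sym cong_trans)
  have c3: "[w = y] (mod M)" by (rule cos[OF wA])
  have "[z + N - w + w = i * y + y] (mod M)" by (rule cong_add[OF c2 c3])
  moreover have "z + N - w + w = z + N" using w by simp
  ultimately have c4: "[z + N = i * y + y] (mod M)" by simp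
  have "[z + N = z + 0] (mod M)" using MN by (intro cong_add) (auto simp: cong_0_iff)
  then have "[z = i * y + y] (mod M)" using c4 by (metis cong_sym cong_trans add_0_right)
  then show ?case by (simp add: add.commute)
qed

lemma gpow_pos:
  assumes yA: "y \<in> A" and yN: "y < N" and N0: "N > 0"
  shows "gpow N (ind A) i ((i * y) mod N) > 0"
proof (induction i)
  case 0 then show ?case using N0 by (simp add: ind_def)
next
  case (Suc i)
  have eq: "((Suc i * y) mod N + N - y) mod N = (i * y) mod N"
  proof -
    have "(Suc i * y) mod N + N - y = (Suc i * y) mod N + (N - y)" using yN by simp
    then have "((Suc i * y) mod N + N - y) mod N = (Suc i * y + (N - y)) mod N" by (simp add: mod_add_left_eq)
    also have "Suc i * y + (N - y) = i * y + N" using yN by simp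
    finally show ?thesis by simp
  qed
  have iy: "ind A y = 1" using yA by (simp add: ind_def)
  have "0 < ind A y * gpow N (ind A) i (((Suc i * y) mod N + N - y) mod N)"
    unfolding eq iy using Suc by simp
  also have "\<dots> \<le> (\<Sum>w<N. ind A w * gpow N (ind A) i (((Suc i * y) mod N + N - w) mod N))"
    by (rule member_le_sum) (use yN gpow_nonneg in \<open>auto simp: ind_def\<close>)
  finally show ?case by (simp add: cconv_def)
qed

text \<open>For a prime q prime to N, the Frobenius
  congruence gives a_A^q = a_{qA} mod q.  Since a_A^q is constant on each member C,
  a_{qA} is constant mod q on C; as it takes only the values 0 and 1, C meets qA only
  if C is contained in qA.\<close>
lemma block_mult_prime:
  assumes U: "unital_partition N P" and N: "N > 0" and A: "A \<in> P"
    and C: "C \<in> P" "z1 \<in> C" "z2 \<in> C"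
    and q: "prime q" "coprime q N" and z1: "z1 \<in> mulset N q A"
  shows "z2 \<in> mulset N q A"
proof (rule ccontr)
  assume nz2: "z2 \<notin> mulset N q A"
  have P: "is_partition_of N P" using U unfolding unital_partition_def by auto
  have AN: "A \<subseteq> {..<N}" by (rule partition_sub[OF P A])
  have finA: "finite A" using AN finite_subset by blast
  obtain R where R: "(\<Sum>x\<in>A. monom 1 x) ^ q = (\<Sum>x\<in>A. monom 1 x ^ q) + of_nat q * (R :: int poly)"
    using sum_power_prime_cong[OF q(1) finA] by blast
  define s where "s z = (\<Sum>x\<in>A. if (x * q) mod N = z then 1 else 0 :: int)" for z
  have frob: "gpow N (ind A) q z = s z + int q * cyc_coeff N R z" if "z < N" for z
  proof -
    have "gpow N (ind A) q z = cyc_coeff N (block_poly A ^ q) z"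
      using gpow_cyc_coeff[OF AN N that] .
    also have "block_poly A ^ q = (\<Sum>x\<in>A. monom 1 (x * q)) + of_nat q * R"
      unfolding block_poly_def R by (simp add: monom_power)
    also have "cyc_coeff N ((\<Sum>x\<in>A. monom 1 (x * q)) + of_nat q * R) z
        = cyc_coeff N (\<Sum>x\<in>A. monom 1 (x * q)) z + int q * cyc_coeff N R z"
      by (simp only: cyc_coeff_add of_nat_mult_conv_smult cyc_coeff_smult)
    also have "cyc_coeff N (\<Sum>x\<in>A. monom 1 (x * q)) z = s z"
      by (simp add: cyc_coeff_sum cyc_coeff_monom s_def)
    finally show ?thesis .
  qed
  obtain x1 where x1: "x1 \<in> A" "z1 = (q * x1) mod N" using z1 unfolding mulset_def by blast
  have "s z1 = (\<Sum>x\<in>A. if x = x1 then 1 else 0)"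
    unfolding s_def
  proof (rule sum.cong[OF refl])
    fix x assume x: "x \<in> A"
    have "x * q mod N = z1 \<longleftrightarrow> x = x1"
      using mod_mult_inj[OF q(2), of x x1] x x1 AN by (auto simp: mult.commute)
    then show "(if x * q mod N = z1 then 1 else 0) = (if x = x1 then 1 else (0::int))" by simp
  qed
  then have s1: "s z1 = 1" using finA x1 by simp
  have s2: "s z2 = 0" unfolding s_def
  proof (rule sum.neutral, rule ballI)
    fix x assume "x \<in> A"
    then have "(x * q) mod N \<noteq> z2" using nz2 unfolding mulset_def by (auto simp: mult.commute)
    then show "(if (x * q) mod N = z2 then 1 else 0 :: int) = 0" by simp
  qed
  have "gpow N (ind A) q z1 = gpow N (ind A) q z2"
    by (rule zspan_const[OF P gpow_zspan[OF U A] C])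
  moreover have "z1 < N" "z2 < N" using partition_sub[OF P C(1)] C by auto
  ultimately have "1 + int q * cyc_coeff N R z1 = int q * cyc_coeff N R z2"
    using frob[of z1] frob[of z2] s1 s2 by simp
  then have "1 = int q * (cyc_coeff N R z2 - cyc_coeff N R z1)" by (simp add: algebra_simps)
  then have "int q dvd 1" by (rule dvdI)
  then have "int q \<le> 1" by (rule zdvd_imp_le) simp
  then show False using prime_gt_1_nat[OF q(1)] by simp
qed

definition saturated :: "nat \<Rightarrow> nat set set \<Rightarrow> nat set \<Rightarrow> bool" where
  "saturated N P S \<longleftrightarrow> S \<subseteq> {..<N} \<and> (\<forall>C\<in>P. C \<inter> S \<noteq> {} \<longrightarrow> C \<subseteq> S)"

lemma saturated_block: "saturated N P S \<Longrightarrow> C \<in> P \<Longrightarrow> z \<in> C \<Longrightarrow> z \<in> S \<Longrightarrow> C \<subseteq> S"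
  unfolding saturated_def by blast

lemma member_saturated:
  assumes "is_partition_of N P" "A \<in> P" shows "saturated N P A"
  unfolding saturated_def using partition_sub[OF assms] partition_disj[OF assms(1) _ assms(2)] by blast

lemma saturated_mult_prime:
  assumes U: "unital_partition N P" and N: "N > 0" and S: "saturated N P S"
    and q: "prime q" "coprime q N"
  shows "saturated N P (mulset N q S)"
proof -
  have P: "is_partition_of N P" using U unfolding unital_partition_def by auto
  have "C \<subseteq> mulset N q S" if C: "C \<in> P" "z \<in> C" "z \<in> mulset N q S" for C z
  proof
    fix z' assume z': "z' \<in> C"
    obtain x where x: "x \<in> S" "z = (q * x) mod N" using C(3) unfolding mulset_def by blast
    have "x < N" using S x unfolding saturated_def by blast
    then obtain A where A: "A \<in> P" "x \<in> A" using partition_cover[OF P] by blast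
    have "A \<subseteq> S" using saturated_block[OF S A x(1)] .
    moreover have "z \<in> mulset N q A" using x A unfolding mulset_def by blast
    then have "z' \<in> mulset N q A" by (rule block_mult_prime[OF U N A(1) C(1) C(2) z' q])
    ultimately show "z' \<in> mulset N q S" unfolding mulset_def by blast
  qed
  then show ?thesis unfolding saturated_def using mulset_sub[OF N] by blast
qed

lemma saturated_mult:
  assumes U: "unital_partition N P" and N: "N > 0" and S: "saturated N P S"
  shows "m > 0 \<Longrightarrow> coprime m N \<Longrightarrow> saturated N P (mulset N m S)"
proof (induction m rule: less_induct)
  case (less m)
  show ?case
  proof (cases "m = 1")
    case True then show ?thesis using S mulset_1[of S N] by (simp add: saturated_def)
  next
    case False
    then obtain q where q: "prime q" "q dvd m" using prime_factor_nat by blast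
    then obtain m' where m': "m = q * m'" by blast
    have "m' > 0" "m' < m" using less.prems m' prime_gt_1_nat[OF q(1)] by auto
    moreover have "coprime m' N" "coprime q N" using less.prems(2) m' by auto
    ultimately have "saturated N P (mulset N q (mulset N m' S))"
      by (intro saturated_mult_prime[OF U N _ q(1)] less.IH)
    then show ?thesis using m' by (simp add: mulset_mult)
  qed
qed

text \<open>Multiplier theorem: every unit m of Z/NZ permutes the members of a unital
  partition.  mA is a union of members; if C is one of them, then m'C (m' the inverse
  of m) is a union of members contained in A, hence equal to A, so C = mA.\<close>
theorem multiplier:
  assumes U: "unital_partition N P" and N: "N > 1" and A: "A \<in> P" and m: "coprime m N"
  shows "mulset N m A \<in> P"
proof -
  have P: "is_partition_of N P" using U unfolding unital_partition_def by auto
  have N0: "N > 0" using N by simp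
  have pos: "k > 0" if "coprime k N" for k
    using that N by (cases "k = 0") auto
  obtain m' where m': "coprime m' N" "\<And>B. B \<subseteq> {..<N} \<Longrightarrow> mulset N (m' * m) B = B"
    using mulset_inverse[OF m N] by blast
  have SmA: "saturated N P (mulset N m A)"
    by (rule saturated_mult[OF U N0 member_saturated[OF P A] pos[OF m] m])
  have "A \<noteq> {}" using P A unfolding is_partition_of_def by simp
  then obtain a where "a \<in> A" by blast
  then have z: "(m * a) mod N \<in> mulset N m A" unfolding mulset_def by blast
  have "(m * a) mod N < N" using N0 by simp
  then obtain C where C: "C \<in> P" "(m * a) mod N \<in> C" by (rule partition_cover[OF P])
  have CmA: "C \<subseteq> mulset N m A" by (rule saturated_block[OF SmA C z])
  have "mulset N m' C \<subseteq> mulset N m' (mulset N m A)" using CmA unfolding mulset_def by blast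
  also have "\<dots> = A" using m'(2)[OF partition_sub[OF P A]] by (simp add: mulset_mult)
  finally have sub: "mulset N m' C \<subseteq> A" .
  have satC: "saturated N P (mulset N m' C)"
    by (rule saturated_mult[OF U N0 member_saturated[OF P C(1)] pos[OF m'(1)] m'(1)])
  have w: "(m' * ((m * a) mod N)) mod N \<in> mulset N m' C" using C unfolding mulset_def by blast
  then have "A \<subseteq> mulset N m' C" using saturated_block[OF satC A _ w] sub by blast
  with sub have "mulset N m' C = A" by (rule antisym)
  then have "mulset N m A = mulset N (m * m') C" by (simp add: mulset_mult)
  also have "\<dots> = C" using m'(2)[OF partition_sub[OF P C(1)]] by (simp add: mult.commute)
  finally show ?thesis using C by simp
qed

lemma cong_nat_dvd: "[a = b] (mod m) \<longleftrightarrow> int m dvd int a - int b" for a b m :: nat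
  by (metis cong_int_iff cong_iff_dvd_diff)

lemma cong_one_pow_prime:
  fixes p x j :: nat
  assumes p: "prime p" and j: "j \<ge> 1" and x: "[x = 1] (mod p ^ j)"
  shows "[x ^ p = 1] (mod p ^ Suc j)"
proof -
  have d1: "int (p ^ j) dvd int x - 1" using x by (simp add: cong_nat_dvd)
  have "p dvd p ^ j" using j by (intro dvd_power) auto
  then have "[x = 1] (mod p)" by (rule cong_dvd_modulus_nat[OF x])
  then have "[(\<Sum>i<p. x ^ i) = (\<Sum>i<p. 1 ^ i)] (mod p)" by (intro cong_sum cong_pow) auto
  then have "[(\<Sum>i<p. x ^ i) = 0] (mod p)" by (simp add: cong_def)
  then have "int p dvd int (\<Sum>i<p. x ^ i)" by (simp only: cong_0_iff int_dvd_int_iff)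
  moreover have "int x ^ p - 1 = (int x - 1) * int (\<Sum>i<p. x ^ i)"
    by (simp add: power_diff_1_eq)
  ultimately have "int (p ^ j) * int p dvd int x ^ p - 1"
    using d1 by (simp add: mult_dvd_mono)
  then have "int (p ^ Suc j) dvd int (x ^ p) - int 1" by (simp add: mult.commute)
  then show ?thesis by (simp add: cong_nat_dvd)
qed

lemma cong_one_pow_prime_power:
  fixes p x j :: nat
  assumes p: "prime p" and j: "j \<ge> 1" and x: "[x = 1] (mod p ^ j)"
  shows "[x ^ (p ^ i) = 1] (mod p ^ (j + i))"
proof (induction i)
  case (Suc i)
  have "[(x ^ (p ^ i)) ^ p = 1] (mod p ^ Suc (j + i))"
    by (rule cong_one_pow_prime[OF p _ Suc]) (use j in simp)
  then show ?case by (simp add: power_mult[symmetric] mult.commute)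
qed (use x in simp)

lemma primroot_pow_cong_one_iff:
  fixes p n \<alpha> e j :: nat
  assumes p: "prime p" and r: "residue_primroot (p ^ n) \<alpha>" and j: "1 \<le> j" "j \<le> n"
  shows "[\<alpha> ^ e = 1] (mod p ^ j) \<longleftrightarrow> totient (p ^ j) dvd e"
proof
  assume c: "[\<alpha> ^ e = 1] (mod p ^ j)"
  have "[(\<alpha> ^ e) ^ (p ^ (n - j)) = 1] (mod p ^ (j + (n - j)))"
    by (rule cong_one_pow_prime_power[OF p j(1) c])
  then have "[\<alpha> ^ (e * p ^ (n - j)) = 1] (mod p ^ n)" using j by (simp add: power_mult)
  then have "totient (p ^ n) dvd e * p ^ (n - j)"
    using r by (simp add: ord_divides' residue_primroot_def)
  moreover have "totient (p ^ n) = p ^ (n - j) * totient (p ^ j)"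
    using j p by (simp add: totient_prime_power power_add[symmetric] mult.assoc)
  ultimately have "p ^ (n - j) * totient (p ^ j) dvd p ^ (n - j) * e" by (simp add: mult.commute)
  then show "totient (p ^ j) dvd e" using p by (simp add: prime_gt_0_nat)
next
  assume d: "totient (p ^ j) dvd e"
  have "coprime \<alpha> p" using r j by (simp add: residue_primroot_def coprime_commute)
  then have "[\<alpha> ^ totient (p ^ j) = 1] (mod p ^ j)" by (intro euler_theorem) simp
  then have "[(\<alpha> ^ totient (p ^ j)) ^ (e div totient (p ^ j)) = 1] (mod p ^ j)"
    using cong_pow by fastforce
  then show "[\<alpha> ^ e = 1] (mod p ^ j)" using d by (simp add: power_mult[symmetric])
qed

lemma primroot_discrete_log:
  fixes N \<alpha> m :: nat
  assumes r: "residue_primroot N \<alpha>" and N: "N > 1" and m: "coprime m N"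
  obtains u where "[\<alpha> ^ u = m] (mod N)"
proof -
  have "m mod N \<noteq> 0"
  proof
    assume "m mod N = 0"
    then have "N dvd m" by auto
    then have "is_unit N" using m by (meson coprime_common_divisor dvd_refl)
    then show False using N by simp
  qed
  then have "m mod N \<in> totatives N" using m N by (simp add: totatives_def less_imp_le)
  then have "m mod N \<in> (\<lambda>i. \<alpha> ^ i mod N) ` {..<totient N}"
    using residue_primroot_is_generator[OF N r] by (simp add: bij_betw_def)
  then obtain u where "\<alpha> ^ u mod N = m mod N" by (auto simp: image_iff)
  then show ?thesis using that by (simp add: cong_def)
qed

lemma cong_cancel_pow:
  fixes p j b a c :: nat
  assumes p: "prime p" and h: "[p ^ j * a = p ^ j * c] (mod p ^ (j + b))"
  shows "[a = c] (mod p ^ b)"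
proof -
  have "int (p ^ j) * int (p ^ b) dvd int (p ^ j) * (int a - int c)"
    using h by (simp add: cong_nat_dvd power_add algebra_simps)
  moreover have nz: "int (p ^ j) \<noteq> 0" using p by (simp add: prime_gt_0_nat)
  ultimately have "int (p ^ b) dvd int a - int c" using p by (auto simp: prime_gt_0_nat)
  then show ?thesis by (simp add: cong_nat_dvd)
qed

lemma cong_one_mult:
  fixes p j b m w :: nat
  assumes m: "[m = 1] (mod p ^ b)" and w: "p ^ j dvd w"
  shows "[m * w = w] (mod p ^ (j + b))"
proof -
  have "int (p ^ b) dvd int m - 1" using m by (simp add: cong_nat_dvd)
  then have "int (p ^ b) * int (p ^ j) dvd (int m - 1) * int w" using w by (intro mult_dvd_mono) auto
  then have "int (p ^ (j + b)) dvd int (m * w) - int w" by (simp add: power_add algebra_simps)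
  then show ?thesis by (simp add: cong_nat_dvd)
qed

lemma cong_dvd_transfer:
  fixes z w M d :: nat
  assumes "[z = w] (mod M)" "d dvd M" "d dvd w"
  shows "d dvd z"
  using assms by (metis cong_dvd_iff cong_dvd_modulus_nat)

definition layer :: "nat \<Rightarrow> nat \<Rightarrow> nat \<Rightarrow> nat set" where
  "layer q M j = {z. z < M \<and> q ^ j dvd z \<and> \<not> q ^ Suc j dvd z}"

lemma exact_power_dvd_iff:
  fixes p z j :: nat
  assumes p: "prime p" and z: "z \<noteq> 0"
  shows "p ^ j dvd z \<and> \<not> p ^ Suc j dvd z \<longleftrightarrow> multiplicity p z = j"
proof -
  have "p ^ i dvd z \<longleftrightarrow> i \<le> multiplicity p z" for i
    using power_dvd_iff_le_multiplicity[OF z, of p i] prime_gt_1_nat[OF p] by simp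
  from this[of j] this[of "Suc j"] show ?thesis by linarith
qed

lemma layer_lt:
  fixes p n z j :: nat
  assumes p: "prime p" and z: "0 < z" "z < p ^ n" "p ^ j dvd z"
  shows "j < n"
proof -
  have "p ^ j \<le> z" using z by (simp add: dvd_imp_le)
  then have "p ^ j < p ^ n" using z by simp
  then show ?thesis by (rule power_less_imp_less_exp[OF prime_gt_1_nat[OF p]])
qed

lemma layer_decomp:
  fixes p j z :: nat
  assumes p: "prime p" and "p ^ j dvd z" "\<not> p ^ Suc j dvd z"
  shows "\<exists>z'. z = p ^ j * z' \<and> coprime z' p"
proof -
  obtain z' where z': "z = p ^ j * z'" using assms by blast
  have "\<not> p dvd z'"
  proof
    assume "p dvd z'" then have "p ^ Suc j dvd z" using z' by simp
    then show False using assms by simp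
  qed
  then have "coprime z' p" using p by (simp add: prime_imp_coprime coprime_commute)
  then show ?thesis using z' by blast
qed

lemma Bset_layer:
  fixes p n k y :: nat
  assumes p: "prime p" and k: "k < n" and y: "y \<in> Bset p n k"
  shows "y \<in> layer p (p ^ n) k"
proof -
  obtain x where x: "y = (p ^ k * x) mod p ^ n" "coprime x (p ^ n)" using y unfolding Bset_def by blast
  have c: "[y = p ^ k * x] (mod p ^ n)" using x(1) by (simp add: cong_def)
  have d1: "p ^ k dvd p ^ n" and d2: "p ^ Suc k dvd p ^ n"
    using k by (intro le_imp_power_dvd; simp)+
  have "\<not> p ^ Suc k dvd y"
  proof
    assume "p ^ Suc k dvd y"
    then have "p ^ k * p dvd p ^ k * x" using cong_dvd_transfer[OF cong_sym[OF c] d2] by simp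
    then have "p dvd x" using p by (simp add: prime_gt_0_nat)
    moreover have "coprime x p" using x(2) k by simp
    ultimately show False using p by (metis coprime_commute not_prime_unit coprime_absorb_left)
  qed
  moreover have "p ^ k dvd y" using cong_dvd_transfer[OF c d1] by simp
  moreover have "y < p ^ n" using x(1) p by (simp add: prime_gt_0_nat)
  ultimately show ?thesis by (simp add: layer_def)
qed

lemma totient_prime_power_dvd_imp_le:
  fixes p i j :: nat
  assumes p: "prime p" and ij: "1 \<le> i" "1 \<le> j" and d: "totient (p ^ i) dvd totient (p ^ j)"
  shows "i \<le> j"
proof -
  have "p ^ (i - 1) * (p - 1) dvd p ^ (j - 1) * (p - 1)"
    using d p ij by (simp add: totient_prime_power)
  moreover have "p - 1 > 0" using prime_gt_1_nat[OF p] by simp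
  ultimately have "p ^ (i - 1) dvd p ^ (j - 1)" by simp
  then have "i - 1 \<le> j - 1" using p by (simp add: dvd_power_iff_le prime_ge_2_nat)
  then show ?thesis using ij by simp
qed

lemma card_residue_class:
  fixes M K w :: nat
  assumes M: "M > 0"
  shows "card {z. z < M * K \<and> [z = w] (mod M)} = K"
proof -
  define w0 where "w0 = w mod M"
  have w0: "w0 < M" using M by (simp add: w0_def)
  have eq: "{z. z < M * K \<and> [z = w] (mod M)} = (\<lambda>t. w0 + M * t) ` {..<K}"
  proof (intro equalityI subsetI)
    fix z assume z: "z \<in> {z. z < M * K \<and> [z = w] (mod M)}"
    then have zm: "z mod M = w0" by (simp add: cong_def w0_def)
    have "z = w0 + M * (z div M)" using zm by (metis div_mult_mod_eq add.commute mult.commute)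
    moreover have "z div M < K" using z M by (simp add: less_mult_imp_div_less mult.commute)
    ultimately show "z \<in> (\<lambda>t. w0 + M * t) ` {..<K}" by blast
  next
    fix z assume "z \<in> (\<lambda>t. w0 + M * t) ` {..<K}"
    then obtain t where t: "t < K" "z = w0 + M * t" by blast
    have "w0 + M * t < M + M * t" using w0 by simp
    also have "\<dots> = M * Suc t" by simp
    also have "\<dots> \<le> M * K" using t by (intro mult_le_mono2) simp
    finally have "z < M * K" using t by simp
    moreover have "[z = w] (mod M)" using t w0 by (simp add: cong_def w0_def)
    ultimately show "z \<in> {z. z < M * K \<and> [z = w] (mod M)}" by blast
  qed
  have "inj_on (\<lambda>t. w0 + M * t) {..<K}" using M by (auto simp: inj_on_def)
  then show ?thesis unfolding eq by (simp add: card_image)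
qed

lemma layer_unit:
  fixes p n j z w z' w' N :: nat
  assumes p: "prime p" and NN: "N = p ^ n" and j: "j < n"
    and z: "z = p ^ j * z'" "coprime z' p" "z < N"
    and w: "w = p ^ j * w'" "coprime w' p"
  defines "m \<equiv> z' * w' ^ (totient N - 1)"
  shows "coprime m N" "(m * w) mod N = z"
    "\<And>b. j + b \<le> n \<Longrightarrow> [z = w] (mod p ^ (j + b)) \<Longrightarrow> [m = 1] (mod p ^ b)"
proof -
  have n0: "n > 0" using j by simp
  have N1: "N > 1" using NN one_less_power[OF prime_gt_1_nat[OF p] n0] by simp
  show cm: "coprime m N" unfolding m_def NN using z w by simp
  have cw: "coprime w' N" using w NN by simp
  have tot: "totient N > 0" using N1 by simp
  have wT: "w' ^ (totient N - 1) * w' = w' ^ totient N" using tot by (metis Suc_diff_1 power_Suc2)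
  have e: "[w' ^ totient N = 1] (mod N)" using euler_theorem[OF cw] .
  have "m * w = p ^ j * z' * (w' ^ (totient N - 1) * w')" unfolding m_def w by (simp add: ac_simps)
  also have "\<dots> = z * w' ^ totient N" using z wT by simp
  finally have mw: "m * w = z * w' ^ totient N" .
  have "[z * w' ^ totient N = z * 1] (mod N)" by (rule cong_scalar_left[OF e])
  then show "(m * w) mod N = z" using mw z by (simp add: cong_def)
  fix b assume b: "j + b \<le> n" and c: "[z = w] (mod p ^ (j + b))"
  have "[z' = w'] (mod p ^ b)" using cong_cancel_pow[OF p, of j z' w' b] c z w by simp
  then have "[m = w' * w' ^ (totient N - 1)] (mod p ^ b)" unfolding m_def by (rule cong_scalar_right)
  moreover have "[w' * w' ^ (totient N - 1) = 1] (mod p ^ b)"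
  proof -
    have "p ^ b dvd N" unfolding NN using b by (intro le_imp_power_dvd) simp
    then show ?thesis using e wT by (metis cong_dvd_modulus_nat mult.commute)
  qed
  ultimately show "[m = 1] (mod p ^ b)" by (rule cong_trans)
qed

text \<open>A sum of powers p^(n-j-b) over distinct j can only be a power of p if it has a
  single term: otherwise it is p^g (1 + p X) with X > 0.\<close>
lemma prime_power_sum_singleton:
  fixes p n b e :: nat and J :: "nat set"
  assumes p: "prime p" and J: "finite J" "J \<noteq> {}" and Jb: "\<forall>j\<in>J. j + b \<le> n"
    and s: "(\<Sum>j\<in>J. p ^ (n - j - b)) = p ^ e"
  shows "J = {Max J}"
proof -
  define j0 where "j0 = Max J"
  have j0J: "j0 \<in> J" using J by (simp add: j0_def)
  have j0m: "j \<le> j0" if "j \<in> J" for j using J that by (simp add: j0_def)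
  define g where "g = n - j0 - b"
  define X where "X = (\<Sum>j\<in>J - {j0}. p ^ (j0 - j - 1))"
  have "(\<Sum>j\<in>J. p ^ (n - j - b)) = p ^ (n - j0 - b) + (\<Sum>j\<in>J - {j0}. p ^ (n - j - b))"
    using J j0J by (simp add: sum.remove)
  also have "(\<Sum>j\<in>J - {j0}. p ^ (n - j - b)) = (\<Sum>j\<in>J - {j0}. p ^ g * p * p ^ (j0 - j - 1))"
  proof (rule sum.cong[OF refl])
    fix j assume j: "j \<in> J - {j0}"
    then have "j < j0" using j0m by force
    moreover have "j0 + b \<le> n" using Jb j0J by blast
    ultimately have "n - j - b = g + 1 + (j0 - j - 1)" unfolding g_def by simp
    then show "p ^ (n - j - b) = p ^ g * p * p ^ (j0 - j - 1)" by (simp add: power_add)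
  qed
  also have "\<dots> = p ^ g * (p * X)" by (simp add: X_def sum_distrib_left mult.assoc)
  finally have "p ^ e = p ^ g * (1 + p * X)" using s by (simp add: g_def algebra_simps)
  then have dv: "1 + p * X dvd p ^ e" by (metis dvd_triv_right)
  have "\<not> p dvd 1 + p * X"
  proof
    assume "p dvd 1 + p * X" then have "p dvd (1 + p * X) - p * X" by (intro dvd_diff_nat) simp_all
    then show False using p by simp
  qed
  then have "coprime (1 + p * X) p" using p by (simp add: prime_imp_coprime coprime_commute)
  then have "coprime (1 + p * X) (p ^ e)" by simp
  then have "is_unit (1 + p * X)" using dv by (meson coprime_common_divisor dvd_refl)
  then have "1 + p * X = 1" by simp
  then have "X = 0" using p by (simp add: prime_gt_0_nat)
  have "J - {j0} = {}"
  proof (rule ccontr)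
    assume "J - {j0} \<noteq> {}" then obtain j where jj: "j \<in> J - {j0}" by blast
    then have "p ^ (j0 - j - 1) \<le> X" unfolding X_def using J by (intro member_le_sum) auto
    moreover have "p ^ (j0 - j - 1) > 0" using p by (simp add: prime_gt_0_nat)
    ultimately show False using \<open>X = 0\<close> by simp
  qed
  then show ?thesis using j0J unfolding j0_def by blast
qed

context
  fixes p n \<alpha> N :: nat and P :: "nat set set"
  assumes p: "prime p" and n: "1 \<le> n" and NN: "N = p ^ n" and U: "unital_partition N P"
    and r: "residue_primroot N \<alpha>"
begin

lemma N_gt_1: "N > 1" using NN one_less_power[OF prime_gt_1_nat[OF p], of n] n by simp

lemma partition_P: "is_partition_of N P" using U unfolding unital_partition_def by simp

lemma coprime_alpha: "coprime \<alpha> N" using r by (simp add: residue_primroot_def coprime_commute)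

lemma member_fixed:
  assumes A: "A \<in> P" and x: "x \<in> A" and m: "coprime m N" and mx: "(m * x) mod N \<in> A"
  shows "mulset N m A = A"
proof -
  have "mulset N m A \<in> P" by (rule multiplier[OF U N_gt_1 A m])
  moreover have "(m * x) mod N \<in> mulset N m A" using x unfolding mulset_def by blast
  ultimately show ?thesis using partition_disj[OF partition_P _ A _ mx] by blast
qed

text \<open>If a unit v maps Y (in the member A) into the member B, then any u whose action
  keeps vY inside B also keeps Y inside A: vA = B and multiplication is commutative.\<close>
lemma member_mult_transfer:
  assumes A: "A \<in> P" "Y \<in> A" and B: "B \<in> P" and v: "coprime v N"
    and vY: "(v * Y) mod N \<in> B" and u: "(u * ((v * Y) mod N)) mod N \<in> B"
  shows "(u * Y) mod N \<in> A"
proof -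
  have N0: "N > 0" using N_gt_1 by simp
  have "mulset N v A \<in> P" by (rule multiplier[OF U N_gt_1 A(1) v])
  moreover have "(v * Y) mod N \<in> mulset N v A" using A(2) unfolding mulset_def by blast
  ultimately have vA: "mulset N v A = B" using partition_disj[OF partition_P _ B _ vY] by blast
  have "(u * ((v * Y) mod N)) mod N = (v * ((u * Y) mod N)) mod N"
    by (simp add: mod_mult_right_eq ac_simps)
  then obtain z where z: "z \<in> A" "(v * z) mod N = (v * ((u * Y) mod N)) mod N"
    using u unfolding vA[symmetric] mulset_def by auto
  have "z < N" using partition_sub[OF partition_P A(1)] z(1) by blast
  then have "z = (u * Y) mod N" using mod_mult_inj[OF v _ _ z(2)] N0 by simp
  then show ?thesis using z(1) by simp
qed

context
  fixes y b :: nat and A :: "nat set"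
  assumes A: "A \<in> P" and y: "y \<in> A" and b: "1 \<le> b" "b \<le> n"
    and uv: "uval p n \<alpha> A y = totient (p ^ b)"
begin

lemma uval_least:
  shows "0 < totient (p ^ b)" "(\<alpha> ^ totient (p ^ b) * y) mod N \<in> A"
    "\<And>u. 0 < u \<Longrightarrow> u < totient (p ^ b) \<Longrightarrow> (\<alpha> ^ u * y) mod N \<notin> A"
proof -
  have yN: "y < N" using partition_sub[OF partition_P A] y by blast
  have ex: "\<exists>u. 0 < u \<and> (\<alpha> ^ u * y) mod p ^ n \<in> A"
  proof (intro exI conjI)
    show "0 < totient N" using N_gt_1 by simp
    have "[\<alpha> ^ totient N * y = 1 * y] (mod N)"
      using euler_theorem[OF coprime_alpha] by (rule cong_scalar_right)
    then show "(\<alpha> ^ totient N * y) mod p ^ n \<in> A" using yN y NN by (simp add: cong_def)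
  qed
  have "0 < uval p n \<alpha> A y \<and> (\<alpha> ^ uval p n \<alpha> A y * y) mod p ^ n \<in> A"
    unfolding uval_def by (rule LeastI_ex[OF ex])
  then show "0 < totient (p ^ b)" "(\<alpha> ^ totient (p ^ b) * y) mod N \<in> A" using uv NN by auto
  fix u assume "0 < u" "u < totient (p ^ b)"
  then show "(\<alpha> ^ u * y) mod N \<notin> A"
    using not_less_Least[of u "\<lambda>u. 0 < u \<and> (\<alpha> ^ u * y) mod p ^ n \<in> A"] uv NN
    unfolding uval_def by auto
qed

lemma primroot_power_fixes: "totient (p ^ b) dvd u \<Longrightarrow> mulset N (\<alpha> ^ u) A = A"
proof -
  assume "totient (p ^ b) dvd u"
  then obtain t where t: "u = totient (p ^ b) * t" by blast
  have base: "mulset N (\<alpha> ^ totient (p ^ b)) A = A"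
    by (rule member_fixed[OF A y]) (use coprime_alpha uval_least in auto)
  have "mulset N (\<alpha> ^ (totient (p ^ b) * t)) A = A" for t
  proof (induction t)
    case 0 then show ?case using mulset_1[OF partition_sub[OF partition_P A]] by simp
  next
    case (Suc t)
    have "\<alpha> ^ (totient (p ^ b) * Suc t) = \<alpha> ^ totient (p ^ b) * \<alpha> ^ (totient (p ^ b) * t)"
      by (simp add: power_add)
    then show ?case using Suc base by (simp add: mulset_mult)
  qed
  then show ?thesis using t by simp
qed

text \<open>Conversely alpha^u y \<in> A forces phi(p^b) | u: reduce u mod phi(p^b) using the
  previous lemma and conclude by minimality.\<close>
lemma primroot_power_mem:
  assumes u: "(\<alpha> ^ u * y) mod N \<in> A"
  shows "totient (p ^ b) dvd u"
proof -
  define d where "d = totient (p ^ b)"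
  define T where "T = totient N"
  define t where "t = u div d"
  define rr where "rr = u mod d"
  have d0: "d > 0" using uval_least(1) d_def by simp
  have u_eq: "u = d * t + rr" by (simp add: t_def rr_def)
  define c where "c = d * t * (T - 1)"
  have "mulset N (\<alpha> ^ c) A = A" by (rule primroot_power_fixes) (simp add: c_def d_def)
  then have "(\<alpha> ^ c * ((\<alpha> ^ u * y) mod N)) mod N \<in> A" using u by (rule mulset_fixed_mem)
  then have h: "(\<alpha> ^ (c + u) * y) mod N \<in> A" by (simp add: mod_mult_right_eq power_add mult.assoc)
  have T0: "T > 0" using N_gt_1 T_def by simp
  have "c + u = T * (d * t) + rr" unfolding c_def u_eq using T0
    by (cases T) (simp_all add: algebra_simps)
  then have "\<alpha> ^ (c + u) = (\<alpha> ^ T) ^ (d * t) * \<alpha> ^ rr" by (simp add: power_add power_mult)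
  moreover have "[(\<alpha> ^ T) ^ (d * t) = 1 ^ (d * t)] (mod N)"
    by (rule cong_pow) (use euler_theorem[OF coprime_alpha] T_def in simp)
  ultimately have "[\<alpha> ^ (c + u) = 1 * \<alpha> ^ rr] (mod N)" by (metis cong_scalar_right power_one)
  then have "[\<alpha> ^ (c + u) * y = \<alpha> ^ rr * y] (mod N)" by (metis cong_scalar_right mult_1)
  then have "(\<alpha> ^ rr * y) mod N \<in> A" using h by (simp add: cong_def)
  moreover have "rr < d" using d0 by (simp add: rr_def)
  ultimately have "rr = 0" using uval_least(3)[of rr] d_def by (cases "rr = 0") auto
  then show ?thesis using u_eq d_def by simp
qed

lemma stabiliser_cong_one:
  assumes m: "coprime m N" and w: "w \<in> A" and mw: "(m * w) mod N \<in> A"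
  shows "[m = 1] (mod p ^ b)"
proof -
  obtain u where u: "[\<alpha> ^ u = m] (mod N)" using primroot_discrete_log[OF r N_gt_1 m] .
  have "mulset N m A = A" by (rule member_fixed[OF A w m mw])
  then have "(m * y) mod N \<in> A" using y by (rule mulset_fixed_mem)
  moreover have "[\<alpha> ^ u * y = m * y] (mod N)" using u by (rule cong_scalar_right)
  ultimately have "(\<alpha> ^ u * y) mod N \<in> A" by (simp add: cong_def)
  then have "totient (p ^ b) dvd u" by (rule primroot_power_mem)
  then have "[\<alpha> ^ u = 1] (mod p ^ b)" using primroot_pow_cong_one_iff[OF p _ b] r NN by simp
  moreover have "[\<alpha> ^ u = m] (mod p ^ b)"
    using u NN b by (metis cong_dvd_modulus_nat le_imp_power_dvd)
  ultimately show ?thesis by (metis cong_sym cong_trans)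
qed

lemma cong_one_stabilises:
  assumes m: "coprime m N" and m1: "[m = 1] (mod p ^ b)" and w: "w \<in> A"
  shows "(m * w) mod N \<in> A"
proof -
  obtain u where u: "[\<alpha> ^ u = m] (mod N)" using primroot_discrete_log[OF r N_gt_1 m] .
  have "[\<alpha> ^ u = m] (mod p ^ b)"
    using u NN b by (metis cong_dvd_modulus_nat le_imp_power_dvd)
  then have "[\<alpha> ^ u = 1] (mod p ^ b)" using m1 by (rule cong_trans)
  then have "totient (p ^ b) dvd u" using primroot_pow_cong_one_iff[OF p _ b] r NN by simp
  then have "mulset N (\<alpha> ^ u) A = A" by (rule primroot_power_fixes)
  then have "(\<alpha> ^ u * w) mod N \<in> A" using w by (rule mulset_fixed_mem)
  moreover have "[\<alpha> ^ u * w = m * w] (mod N)" using u by (rule cong_scalar_right)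
  ultimately show ?thesis by (simp add: cong_def)
qed

end

context
  fixes y b k :: nat and A :: "nat set"
  assumes A: "A \<in> P" and y: "y \<in> A" and b: "1 \<le> b" "b \<le> n"
    and uv: "uval p n \<alpha> A y = totient (p ^ b)"
    and k: "k < n" and ylay: "p ^ k dvd y" "\<not> p ^ Suc k dvd y"
begin

lemma member_sub: "A \<subseteq> {..<N}" using partition_sub[OF partition_P A] .

text \<open>{0} is a member and y \<noteq> 0, so A avoids 0: every point of A has a valuation.\<close>
lemma zero_notin: "0 \<notin> A"
proof
  assume "0 \<in> A"
  have "{0} \<in> P" using U unfolding unital_partition_def by simp
  then have "A = {0}" using partition_disj[OF partition_P A _ \<open>0 \<in> A\<close>] by blast
  then have "y = 0" using y by simp
  then show False using ylay by simp
qed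

text \<open>The unit 1 + p^(n-j) fixes every point of valuation j, so it stabilises A if A
  meets the layer j; being congruent to 1 mod p^b then forces j + b \<le> n.\<close>
lemma member_layer_bound:
  assumes w: "w \<in> A" "p ^ j dvd w" "\<not> p ^ Suc j dvd w"
  shows "j + b \<le> n"
proof -
  have w0: "w > 0" using w zero_notin by (cases w) auto
  have wN: "w < N" using w member_sub by blast
  have j: "j < n" by (rule layer_lt[OF p w0 _ w(2)]) (use wN NN in simp)
  define m where "m = 1 + p ^ (n - j)"
  have pd: "p dvd p ^ (n - j)" using j by (intro dvd_power) auto
  have "\<not> p dvd m"
  proof
    assume "p dvd m" then have "p dvd m - p ^ (n - j)" using pd by (intro dvd_diff_nat)
    then have "p dvd 1" unfolding m_def by simp
    then show False using p by simp
  qed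
  then have "coprime p m" by (rule prime_imp_coprime[OF p])
  then have "coprime m p" by (simp add: coprime_commute)
  then have cm: "coprime m N" using NN by simp
  have "N dvd p ^ (n - j) * w"
  proof -
    have "p ^ n = p ^ (n - j) * p ^ j" using j by (simp add: power_add[symmetric])
    then show ?thesis using w(2) NN by (simp add: mult_dvd_mono)
  qed
  then obtain t where t: "p ^ (n - j) * w = N * t" by (elim dvdE)
  have "m * w = w + N * t" unfolding m_def using t by (simp add: algebra_simps)
  then have "(m * w) mod N = w mod N" by simp
  then have "(m * w) mod N \<in> A" using wN w by simp
  then have "[m = 1] (mod p ^ b)" using stabiliser_cong_one[OF A y b uv cm w(1)] by simp
  then have "int (p ^ b) dvd int m - int 1" by (simp only: cong_nat_dvd)
  then have "int (p ^ b) dvd int (p ^ (n - j))" unfolding m_def by simp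
  then have "p ^ b dvd p ^ (n - j)" by (simp only: int_dvd_int_iff)
  then have "b \<le> n - j" using p by (simp add: dvd_power_iff_le prime_ge_2_nat)
  then show ?thesis using j by simp
qed

text \<open>Two points of the layer j differ by a unit, which stabilises A iff it is 1 mod
  p^b; hence A meets the layer j in a full residue class mod p^(j+b).\<close>
lemma member_layer_eq_class:
  assumes w: "w \<in> A" "p ^ j dvd w" "\<not> p ^ Suc j dvd w"
  shows "A \<inter> layer p N j = {z. z < N \<and> [z = w] (mod p ^ (j + b))}"
proof -
  have jb: "j + b \<le> n" by (rule member_layer_bound[OF w])
  have j: "j < n" using jb b by simp
  have wN: "w < N" using w member_sub by blast
  obtain w' where w': "w = p ^ j * w'" "coprime w' p" using layer_decomp[OF p w(2,3)] by blast
  have dvdN: "p ^ (j + b) dvd N" unfolding NN using jb by (intro le_imp_power_dvd) simp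
  show ?thesis
  proof (intro equalityI subsetI)
    fix z assume z: "z \<in> A \<inter> layer p N j"
    then have zl: "z < N" "p ^ j dvd z" "\<not> p ^ Suc j dvd z" by (auto simp: layer_def)
    obtain z' where z': "z = p ^ j * z'" "coprime z' p" using layer_decomp[OF p zl(2,3)] by blast
    note LU = layer_unit[OF p NN j z'(1) z'(2) zl(1) w'(1) w'(2)]
    define m where "m = z' * w' ^ (totient N - 1)"
    have mwz: "(m * w) mod N = z" using LU(2) unfolding m_def .
    then have "(m * w) mod N \<in> A" using z by simp
    then have "[m = 1] (mod p ^ b)" using stabiliser_cong_one[OF A y b uv _ w(1)] LU(1) unfolding m_def by blast
    then have c1: "[m * w = w] (mod p ^ (j + b))" using w(2) by (rule cong_one_mult)
    have "[m * w = z] (mod N)" using mwz zl(1) by (simp add: cong_def)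
    then have "[m * w = z] (mod p ^ (j + b))" using dvdN by (rule cong_dvd_modulus_nat)
    then have "[z = w] (mod p ^ (j + b))" using c1 by (metis cong_sym cong_trans)
    then show "z \<in> {z. z < N \<and> [z = w] (mod p ^ (j + b))}" using zl by simp
  next
    fix z assume z: "z \<in> {z. z < N \<and> [z = w] (mod p ^ (j + b))}"
    then have zN: "z < N" and zc: "[z = w] (mod p ^ (j + b))" by auto
    have d1: "p ^ j dvd p ^ (j + b)" by (intro le_imp_power_dvd) simp
    have d2: "p ^ Suc j dvd p ^ (j + b)" using b by (intro le_imp_power_dvd) simp
    have zj: "p ^ j dvd z" by (rule cong_dvd_transfer[OF zc d1 w(2)])
    have zj1: "\<not> p ^ Suc j dvd z"
    proof
      assume "p ^ Suc j dvd z"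
      then have "p ^ Suc j dvd w" using cong_dvd_transfer[OF cong_sym[OF zc] d2] by blast
      then show False using w by simp
    qed
    obtain z' where z': "z = p ^ j * z'" "coprime z' p" using layer_decomp[OF p zj zj1] by blast
    note LU = layer_unit[OF p NN j z'(1) z'(2) zN w'(1) w'(2)]
    have "(z' * w' ^ (totient N - 1) * w) mod N \<in> A"
      by (rule cong_one_stabilises[OF A y b uv LU(1) LU(3)[OF jb zc] w(1)])
    then have "z \<in> A" using LU(2) zN by simp
    then show "z \<in> A \<inter> layer p N j" using zN zj zj1 by (simp add: layer_def)
  qed
qed

lemma card_layer:
  assumes w: "w \<in> A" "p ^ j dvd w" "\<not> p ^ Suc j dvd w"
  shows "card (A \<inter> layer p N j) = p ^ (n - j - b)"
proof -
  have jb: "j + b \<le> n" by (rule member_layer_bound[OF w])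
  have "N = p ^ (j + b) * p ^ (n - j - b)" using jb NN by (simp add: power_add[symmetric])
  then have "card {z. z < N \<and> [z = w] (mod p ^ (j + b))} = p ^ (n - j - b)"
    using card_residue_class[of "p ^ (j + b)" "p ^ (n - j - b)" w] p by (simp add: prime_gt_0_nat)
  then show ?thesis using member_layer_eq_class[OF w] by simp
qed

lemma member_valuation:
  assumes z: "z \<in> A"
  shows "z \<in> layer p N (multiplicity p z)" "multiplicity p z < n"
proof -
  have z0: "z \<noteq> 0" using z zero_notin by (cases "z = 0") simp_all
  have zN: "z < N" using z member_sub by blast
  have "p ^ multiplicity p z dvd z \<and> \<not> p ^ Suc (multiplicity p z) dvd z"
    using exact_power_dvd_iff[OF p z0] by simp
  then show "z \<in> layer p N (multiplicity p z)" using zN by (simp add: layer_def)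
  show "multiplicity p z < n"
    by (rule layer_lt[OF p _ _ multiplicity_dvd]) (use z0 zN NN in \<open>auto simp: gr0I\<close>)
qed

lemma layer_eq_multiplicity: "z \<in> layer p N j \<Longrightarrow> multiplicity p z = j"
  using exact_power_dvd_iff[OF p] by (cases "z = 0") (auto simp: layer_def)

lemma card_member_layers:
  defines "J \<equiv> {j. j < n \<and> A \<inter> layer p N j \<noteq> {}}"
  shows "card A = (\<Sum>j\<in>J. p ^ (n - j - b))"
proof -
  have finA: "finite A" using member_sub finite_subset by blast
  have "A = (\<Union>j\<in>J. A \<inter> layer p N j)"
    unfolding J_def using member_valuation by blast
  also have "card \<dots> = (\<Sum>j\<in>J. card (A \<inter> layer p N j))"
  proof (rule card_UN_disjoint)
    show "finite J" unfolding J_def by simp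
    show "\<forall>i\<in>J. finite (A \<inter> layer p N i)" using finA by simp
    show "\<forall>i\<in>J. \<forall>j\<in>J. i \<noteq> j \<longrightarrow> A \<inter> layer p N i \<inter> (A \<inter> layer p N j) = {}"
      using layer_eq_multiplicity by blast
  qed
  also have "\<dots> = (\<Sum>j\<in>J. p ^ (n - j - b))"
  proof (rule sum.cong[OF refl])
    fix j assume "j \<in> J"
    then obtain w where "w \<in> A" "w \<in> layer p N j" unfolding J_def by blast
    then show "card (A \<inter> layer p N j) = p ^ (n - j - b)"
      by (intro card_layer) (auto simp: layer_def)
  qed
  finally show ?thesis .
qed

text \<open>Under condition (p) the sum above is a power of p, so A meets a single layer,
  namely the layer k of y, and A is the residue class of y mod p^(k+b).\<close>
lemma member_in_layer_k:
  assumes cp: "cond_p p P" and z: "z \<in> A"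
  shows "z \<in> layer p N k"
proof -
  define J where "J = {j. j < n \<and> A \<inter> layer p N j \<noteq> {}}"
  obtain e where "card A = p ^ e" using cp A unfolding cond_p_def by blast
  then have s: "(\<Sum>j\<in>J. p ^ (n - j - b)) = p ^ e" using card_member_layers unfolding J_def by simp
  have yN: "y < N" using y member_sub by blast
  have kJ: "k \<in> J" using k y yN ylay unfolding J_def layer_def by blast
  have Jb: "\<forall>j\<in>J. j + b \<le> n"
    unfolding J_def layer_def using member_layer_bound by blast
  have "J = {Max J}" by (rule prime_power_sum_singleton[OF p _ _ Jb s]) (use kJ in \<open>auto simp: J_def\<close>)
  then have "J = {k}" using kJ by (metis singletonD)
  moreover have "multiplicity p z \<in> J"
    using member_valuation[OF z] z unfolding J_def by blast
  ultimately show ?thesis using member_valuation(1)[OF z] by simp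
qed

lemma member_residue_class:
  assumes cp: "cond_p p P" and z: "z \<in> A"
  shows "[z = y] (mod p ^ (k + b))"
  using member_in_layer_k[OF cp z] z member_layer_eq_class[OF y ylay] by blast

end

text \<open>The member containing p y.  Since a_A^p lies in the span, it is constant on that
  member; it does not vanish at p y, so by the support lemma the whole member lies in
  the class of p y mod p^(k+b).\<close>
lemma block_of_p_multiple:
  assumes cp: "cond_p p P" and A: "A \<in> P" and y: "y \<in> A" and b: "1 \<le> b" "b \<le> n"
    and uv: "uval p n \<alpha> A y = totient (p ^ b)"
    and ylay: "y \<in> layer p N k" and kb: "k + b \<le> n"
    and A'': "A'' \<in> P" "(p * y) mod N \<in> A''" and z: "z \<in> A''"
  shows "[z = p * y] (mod p ^ (k + b))"
proof -
  have AN: "A \<subseteq> {..<N}" by (rule partition_sub[OF partition_P A])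
  have N0: "N > 0" using N_gt_1 by simp
  have k: "k < n" using kb b by simp
  have lay: "p ^ k dvd y" "\<not> p ^ Suc k dvd y" "y < N" using ylay by (auto simp: layer_def)
  have MN: "p ^ (k + b) dvd N" unfolding NN using kb by (intro le_imp_power_dvd)
  have "gpow N (ind A) p ((p * y) mod N) > 0" using gpow_pos[OF y lay(3) N0, of p] by simp
  moreover have "gpow N (ind A) p z = gpow N (ind A) p ((p * y) mod N)"
    by (rule zspan_const[OF partition_P gpow_zspan[OF U A] A''(1) z A''(2)])
  moreover have "z < N" using partition_sub[OF partition_P A''(1)] z by blast
  ultimately show ?thesis
    using gpow_support[OF AN MN member_residue_class[OF A y b uv k lay(1,2) cp]] by simp
qed

text \<open>Let A \<ni> y realise b at level k and A' \<ni> y' realise c at level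
  k + 1.  The member A'' of p y is mapped onto A' by a unit v; as alpha^phi(p^c) keeps
  y' in A', it keeps p y in A'', hence fixes p y = p^(k+1) x mod p^(k+b).  Thus
  alpha^phi(p^c) = 1 mod p^(b-1), i.e. phi(p^(b-1)) | phi(p^c), and b - 1 \<le> c.\<close>
lemma valuation_step:
  assumes cp: "cond_p p P" and A: "A \<in> P" and y: "y \<in> A" and b: "2 \<le> b" "k + b \<le> n"
    and uv: "uval p n \<alpha> A y = totient (p ^ b)" and ylay: "y \<in> layer p N k"
    and A': "A' \<in> P" and y': "y' \<in> A'" and c: "1 \<le> c" "c \<le> n"
    and uv': "uval p n \<alpha> A' y' = totient (p ^ c)"
    and y'lay: "y' \<in> layer p N (Suc k)" and k: "Suc k < n"
  shows "b \<le> c + 1"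
proof -
  define d where "d = totient (p ^ c)"
  define Y where "Y = (p * y) mod N"
  have N0: "N > 0" using N_gt_1 by simp
  have "Y < N" using N0 by (simp add: Y_def)
  then obtain A'' where A'': "A'' \<in> P" "Y \<in> A''" by (rule partition_cover[OF partition_P])
  obtain x where x: "y = p ^ k * x" "coprime x p"
    using ylay layer_decomp[OF p] unfolding layer_def by blast
  obtain x' where x': "y' = p ^ Suc k * x'" "coprime x' p"
    using y'lay layer_decomp[OF p] unfolding layer_def by blast
  have py: "p * y = p ^ Suc k * x" using x(1) by simp
  have y'N: "y' < N" using y'lay by (simp add: layer_def)
  note unit = layer_unit[OF p NN k x'(1,2) y'N py x(2)]
  define v where "v = x' * x ^ (totient N - 1)"
  have vY: "(v * Y) mod N = y'" using unit(2) unfolding v_def Y_def by (simp add: mod_mult_right_eq)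
  have "(\<alpha> ^ d * y') mod N \<in> A'"
    using uval_least(2)[OF A' y' _ _ uv'] c by (simp add: d_def)
  then have "(\<alpha> ^ d * Y) mod N \<in> A''"
    using member_mult_transfer[OF A'' A' unit(1)[folded v_def]] vY y' by simp
  moreover have "(p * y) mod N \<in> A''" "1 \<le> b" "b \<le> n" using A''(2) b by (auto simp: Y_def)
  ultimately have "[(\<alpha> ^ d * Y) mod N = p * y] (mod p ^ (k + b))"
    using block_of_p_multiple[OF cp A y _ _ uv ylay b(2) A''(1)] by blast
  moreover have "p ^ (k + b) dvd N" unfolding NN using b by (intro le_imp_power_dvd)
  ultimately have "[\<alpha> ^ d * (p * y) = p * y] (mod p ^ (k + b))"
    unfolding Y_def by (metis cong_dvd_modulus_nat cong_mod_left cong_mod_right cong_trans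
        mod_mult_right_eq cong_def)
  then have "[p ^ Suc k * (\<alpha> ^ d * x) = p ^ Suc k * x] (mod p ^ (Suc k + (b - 1)))"
    using b py by (simp add: ac_simps)
  then have "[\<alpha> ^ d * x = x] (mod p ^ (b - 1))" by (rule cong_cancel_pow[OF p])
  then have "[\<alpha> ^ d * x = 1 * x] (mod p ^ (b - 1))" by simp
  moreover have "coprime x (p ^ (b - 1))" using x(2) by simp
  ultimately have "[\<alpha> ^ d = 1] (mod p ^ (b - 1))" using cong_mult_rcancel_nat by blast
  then have "totient (p ^ (b - 1)) dvd totient (p ^ c)"
    using primroot_pow_cong_one_iff[OF p _ _ _] r NN b by (simp add: d_def)
  then have "b - 1 \<le> c" using totient_prime_power_dvd_imp_le[OF p _ c(1)] b by simp
  then show ?thesis by simp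
qed

end

lemma consecutive_levels:
  fixes p n \<alpha> k b c :: nat and P :: "nat set set"
  assumes p: "prime p" and n: "1 \<le> n" and U: "unital_partition (p ^ n) P"
    and cp: "cond_p p P" and r: "residue_primroot (p ^ n) \<alpha>" and k: "k + 1 < n"
    and A: "A \<in> P" "y \<in> A \<inter> Bset p n k" "uval p n \<alpha> A y = totient (p ^ b)"
    and b: "b \<le> n - k"
    and A': "A' \<in> P" "y' \<in> A' \<inter> Bset p n (k + 1)" "uval p n \<alpha> A' y' = totient (p ^ c)"
    and c: "1 \<le> c" "c \<le> n - (k + 1)"
  shows "b \<le> c + 1"
proof (cases "b \<le> 1")
  case False
  have ylay: "y \<in> layer p (p ^ n) k" using Bset_layer[OF p _ A(2)[THEN IntD2]] k by simp
  have y'lay: "y' \<in> layer p (p ^ n) (Suc k)" using Bset_layer[OF p k] A'(2) by simp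
  show ?thesis
    by (rule valuation_step[OF p n refl U r cp A(1) _ _ _ A(3) ylay A'(1) _ c(1) _ A'(3) y'lay])
      (use A A' False b c k in auto)
qed simp

theorem mainTheorem13:
  fixes p n \<alpha> :: nat and P :: "nat set set" and b :: "nat \<Rightarrow> nat"
  assumes "prime p" and "odd p" and "1 \<le> n"
    and "fusion_partition (p ^ n) P" and "cond_p p P"
    and "residue_primroot (p ^ n) \<alpha>"
    and "\<forall>k<n. 1 \<le> b k \<and> b k \<le> n - k \<and>
           (\<exists>A\<in>Pset p n P k. \<exists>y\<in>A \<inter> Bset p n k. uval p n \<alpha> A y = totient (p ^ b k))"
    and "b n = 0"
  shows "\<forall>k<n. b (k + 1) + k + 1 \<ge> b k + k"
proof (intro allI impI)
  fix k assume k: "k < n"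
  have U: "unital_partition (p ^ n) P" using assms(4) by (simp add: fusion_partition_def)
  obtain A y where A: "A \<in> P" "y \<in> A \<inter> Bset p n k" "uval p n \<alpha> A y = totient (p ^ b k)"
    and bk: "b k \<le> n - k"
    using assms(7) k unfolding Pset_def by blast
  show "b (k + 1) + k + 1 \<ge> b k + k"
  proof (cases "k + 1 = n")
    case True
    then show ?thesis using bk assms(8) by simp
  next
    case False
    then have k1: "k + 1 < n" using k by simp
    obtain A' y' where A': "A' \<in> P" "y' \<in> A' \<inter> Bset p n (k + 1)"
        "uval p n \<alpha> A' y' = totient (p ^ b (k + 1))"
      and bk1: "1 \<le> b (k + 1)" "b (k + 1) \<le> n - (k + 1)"
      using assms(7) k1 unfolding Pset_def by blast
    have "b k \<le> b (k + 1) + 1"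
      using consecutive_levels[OF assms(1,3) U assms(5,6) k1 A bk A' bk1] .
    then show ?thesis by simp
  qed
qed

end
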